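(* Let $A=\{a,b,c\}$, $\Lambda=\{ab^ic\mid i\geq 1\}$ and $\mathcal{T}_2=\{((ab^ic)^2,\varepsilon)\mid i\ge 1\}$. If $w\in A^\ast$ is $\mathcal{T}_2$-irreducible and right invertible in $\Pi_2=\langle a,b,c\mid (ab^ic)^2=1\ (i\geq 1)\rangle$, then $w\in \mathrm{Pre}(\Lambda)^\ast$.
   Context: A word $w$ is $\mathcal{T}_2$-irreducible if it contains no factor of the form $(ab^ic)^2$ with $i\ge1$. $w$ is right invertible in $\Pi_2$ if there is $w'$ with $ww'=1$ in $\Pi_2$. $\mathrm{Pre}(\Lambda)$ denotes the set of non-empty prefixes of words in $\Lambda$, and $\mathrm{Pre}(\Lambda)^\ast$ the set of finite concatenations of such prefixes. *)

theory Defs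
  imports Main "HOL-Library.Sublist"
begin

datatype letter = a | b | c

definition lam :: "nat \<Rightarrow> letter list" where
  "lam i = [a] @ replicate i b @ [c]"

definition Lambda :: "letter list set" where
  "Lambda = {lam i | i. i \<ge> 1}"

definition relator :: "letter list \<Rightarrow> bool" where
  "relator r \<longleftrightarrow> (\<exists>i\<ge>1. r = lam i @ lam i)"

text \<open>The monoid congruence on words generated by the relations r = empty word,
  i.e. equality in the monoid Pi_2.\<close>
inductive pi2_eq :: "letter list \<Rightarrow> letter list \<Rightarrow> bool" where
  refl: "pi2_eq u u"
| sym: "pi2_eq u v \<Longrightarrow> pi2_eq v u"
| trans: "pi2_eq u v \<Longrightarrow> pi2_eq v w \<Longrightarrow> pi2_eq u w"
| rel: "relator r \<Longrightarrow> pi2_eq (u @ r @ v) (u @ v)"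

definition right_invertible :: "letter list \<Rightarrow> bool" where
  "right_invertible w \<longleftrightarrow> (\<exists>w'. pi2_eq (w @ w') [])"

definition T2_irreducible :: "letter list \<Rightarrow> bool" where
  "T2_irreducible w \<longleftrightarrow> \<not> (\<exists>u v r. relator r \<and> w = u @ r @ v)"

definition Pre :: "letter list set \<Rightarrow> letter list set" where
  "Pre L = {p. p \<noteq> [] \<and> (\<exists>x\<in>L. prefix p x)}"

definition star :: "letter list set \<Rightarrow> letter list set" where
  "star S = {concat ps | ps. set ps \<subseteq> S}"

end

theory Submission
  imports Defs
begin

text \<open>Read a word letter by letter onto a stack and delete a relator as soon as the stack
  ends in one. A word ends in at most one relator, since every lam i starts with its only
  letter a; so this reduction is well defined, and pushing a relator onto an irreducible
  stack gives the stack back. Hence reduction is invariant in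
  Pi_2 and fixes irreducible words. If w is irreducible and w w' = 1, pushing w' onto the
  stack w empties it. Walking back from the empty stack, each earlier stack is a prefix of
  a later stack followed by a relator; relators lie in Pre(Lambda)^*, and Pre(L)^* is
  closed under prefixes.\<close>

lemma star_Nil: "[] \<in> star X"
  unfolding star_def by (intro CollectI exI[of _ "[]"]) simp

lemma star_singleton: "x \<in> X \<Longrightarrow> x \<in> star X"
  unfolding star_def by (intro CollectI exI[of _ "[x]"]) simp

lemma star_append: "x \<in> star X \<Longrightarrow> y \<in> star X \<Longrightarrow> x @ y \<in> star X"
proof -
  assume "x \<in> star X" "y \<in> star X"
  then obtain ps qs where "x = concat ps" "set ps \<subseteq> X" "y = concat qs" "set qs \<subseteq> X"
    unfolding star_def by blast
  then show ?thesis unfolding star_def by (intro CollectI exI[of _ "ps @ qs"]) simp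
qed

lemma Pre_prefix: "x \<in> Pre L \<Longrightarrow> prefix p x \<Longrightarrow> p \<noteq> [] \<Longrightarrow> p \<in> Pre L"
  unfolding Pre_def using prefix_order.trans by blast

lemma prefix_concat_in_star_Pre:
  "set ps \<subseteq> Pre L \<Longrightarrow> prefix p (concat ps) \<Longrightarrow> p \<in> star (Pre L)"
proof (induction ps arbitrary: p)
  case Nil
  then show ?case by (simp add: star_Nil)
next
  case (Cons x ps)
  then have x: "x \<in> Pre L" by simp
  from Cons.prems(2) consider "prefix p x" | us where "p = x @ us" "prefix us (concat ps)"
    by (auto simp: prefix_append)
  then show ?case
  proof cases
    case 1
    then show ?thesis
      using x Pre_prefix star_singleton star_Nil by (cases "p = []") blast+
  next
    case 2
    with Cons have "us \<in> star (Pre L)" by simp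
    with 2 x show ?thesis by (simp add: star_append star_singleton)
  qed
qed

lemma star_Pre_prefix: "x \<in> star (Pre L) \<Longrightarrow> prefix p x \<Longrightarrow> p \<in> star (Pre L)"
  unfolding star_def using prefix_concat_in_star_Pre[unfolded star_def] by blast

lemma relator_in_star_Pre_Lambda: "relator r \<Longrightarrow> r \<in> star (Pre Lambda)"
proof -
  assume "relator r"
  then obtain i where i: "i \<ge> 1" "r = lam i @ lam i" unfolding relator_def by blast
  have "lam i \<in> Pre Lambda" unfolding Pre_def Lambda_def lam_def using i by auto
  then show ?thesis using i star_append star_singleton by blast
qed

lemma lam_Cons: "lam i = a # replicate i b @ [c]"
  unfolding lam_def by simp

lemma length_lam: "length (lam i) = i + 2"
  unfolding lam_def by simp

lemma suffix_lam_eq: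
  assumes "lam j = zs @ lam i"
  shows "zs = [] \<and> i = j"
proof -
  have count: "\<And>k. filter ((=) a) (lam k) = [a]"
    unfolding lam_def by (auto simp: filter_replicate)
  have "filter ((=) a) zs = []"
    using arg_cong[OF assms, of "filter ((=) a)"] by (simp add: count)
  moreover have "zs \<noteq> [] \<Longrightarrow> hd zs = a"
    using assms by (cases zs) (auto simp: lam_Cons)
  ultimately have "zs = []" by (cases zs) auto
  with assms show ?thesis using length_lam[of i] length_lam[of j] by simp
qed

lemma append_lam_eq: "xs @ lam i = ys @ lam j \<Longrightarrow> xs = ys \<and> i = j"
proof -
  assume eq: "xs @ lam i = ys @ lam j"
  have "suffix (lam i) (xs @ lam i)" unfolding suffix_def by blast
  moreover have "suffix (lam j) (xs @ lam i)" unfolding eq suffix_def by blast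
  ultimately have "suffix (lam i) (lam j) \<or> suffix (lam j) (lam i)"
    by (rule suffix_same_cases)
  then have "i = j"
  proof
    assume "suffix (lam i) (lam j)"
    then obtain zs where "lam j = zs @ lam i" unfolding suffix_def by blast
    then show ?thesis by (simp add: suffix_lam_eq)
  next
    assume "suffix (lam j) (lam i)"
    then obtain zs where "lam i = zs @ lam j" unfolding suffix_def by blast
    then show ?thesis by (simp add: suffix_lam_eq)
  qed
  with eq show ?thesis by simp
qed

lemma append_relator_eq:
  assumes "relator r" "relator r'" "t @ r = t' @ r'"
  shows "t = t' \<and> r = r'"
proof -
  obtain i j where r: "r = lam i @ lam i" and r': "r' = lam j @ lam j"
    using assms(1,2) unfolding relator_def by blast
  with assms(3) have "(t @ lam i) @ lam i = (t' @ lam j) @ lam j" by simp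
  then have "t @ lam i = t' @ lam j" "i = j" using append_lam_eq by blast+
  with r r' show ?thesis by simp
qed

lemma relator_snoc_c: "relator r \<Longrightarrow> \<exists>q. r = q @ [c]"
  unfolding relator_def lam_def by auto

definition ends_in_relator :: "letter list \<Rightarrow> bool" where
  "ends_in_relator x \<longleftrightarrow> (\<exists>t r. relator r \<and> x = t @ r)"

lemma T2_irreducible_not_ends_in_relator:
  assumes "T2_irreducible x" shows "\<not> ends_in_relator x"
proof
  assume "ends_in_relator x"
  then obtain t r where "relator r" "x = t @ r @ []" unfolding ends_in_relator_def by auto
  with assms show False unfolding T2_irreducible_def by blast
qed

lemma T2_irreducible_append_left: "T2_irreducible (t @ q) \<Longrightarrow> T2_irreducible t"
  unfolding T2_irreducible_def by (metis append.assoc)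

lemma T2_irreducible_snoc:
  assumes "T2_irreducible s" "\<not> ends_in_relator (s @ [l])"
  shows "T2_irreducible (s @ [l])"
  unfolding T2_irreducible_def
proof clarify
  fix u v r assume r: "relator r" and eq: "s @ [l] = u @ r @ v"
  show False
  proof (cases v rule: rev_cases)
    case Nil
    with eq have "s @ [l] = u @ r" by simp
    with assms(2) r show False unfolding ends_in_relator_def by blast
  next
    case (snoc v' x)
    with eq have "s = u @ r @ v'" by simp
    with assms(1) r show False unfolding T2_irreducible_def by blast
  qed
qed

definition push :: "letter list \<Rightarrow> letter \<Rightarrow> letter list" where
  "push s l = (if ends_in_relator (s @ [l])
     then THE t. \<exists>r. relator r \<and> s @ [l] = t @ r else s @ [l])"

lemma push_relator:
  assumes "relator r" "s @ [l] = t @ r"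
  shows "push s l = t"
proof -
  have "ends_in_relator (s @ [l])" unfolding ends_in_relator_def using assms by blast
  moreover have "(THE t. \<exists>r. relator r \<and> s @ [l] = t @ r) = t"
  proof (rule the_equality)
    show "\<exists>r. relator r \<and> s @ [l] = t @ r" using assms by blast
  next
    fix t' assume "\<exists>r'. relator r' \<and> s @ [l] = t' @ r'"
    then obtain r' where r': "relator r'" "t' @ r' = t @ r" using assms(2) by metis
    from append_relator_eq[OF r'(1) assms(1) r'(2)] show "t' = t" ..
  qed
  ultimately show ?thesis unfolding push_def by simp
qed

lemma push_not_relator: "\<not> ends_in_relator (s @ [l]) \<Longrightarrow> push s l = s @ [l]"
  unfolding push_def by simp

lemma push_cases: "push s l = s @ [l] \<or> (\<exists>r. relator r \<and> s @ [l] = push s l @ r)"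
proof (cases "ends_in_relator (s @ [l])")
  case True
  then obtain t r where r: "relator r" "s @ [l] = t @ r" unfolding ends_in_relator_def by blast
  then have "push s l = t" by (rule push_relator)
  with r show ?thesis by blast
next
  case False
  then show ?thesis by (simp add: push_not_relator)
qed

lemma push_not_c: "l \<noteq> c \<Longrightarrow> push s l = s @ [l]"
  by (rule push_not_relator) (auto simp: ends_in_relator_def dest: relator_snoc_c)

lemma T2_irreducible_push:
  assumes "T2_irreducible s" shows "T2_irreducible (push s l)"
proof (cases "ends_in_relator (s @ [l])")
  case True
  then obtain t r where r: "relator r" "s @ [l] = t @ r"
    unfolding ends_in_relator_def by blast
  moreover obtain q where "r = q @ [c]" using relator_snoc_c[OF r(1)] by blast
  ultimately have "s = t @ q" "push s l = t" using push_relator by auto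
  with assms show ?thesis using T2_irreducible_append_left by simp
next
  case False
  with assms show ?thesis by (simp add: push_not_relator T2_irreducible_snoc)
qed

lemma foldl_push_lam: "foldl push s (lam i) = push (s @ a # replicate i b) c"
proof -
  have "foldl push s xs = s @ xs" if "c \<notin> set xs" for s xs
    using that by (induction xs arbitrary: s) (auto simp: push_not_c)
  then have "foldl push s (a # replicate i b) = s @ a # replicate i b"
    by (simp add: push_not_c)
  then show ?thesis
    unfolding lam_Cons by (simp only: append_Cons[symmetric] foldl_append foldl_Cons foldl_Nil)
qed

lemma foldl_push_lam_append:
  "\<not> ends_in_relator (s @ lam i) \<Longrightarrow> foldl push s (lam i) = s @ lam i"
  unfolding foldl_push_lam by (subst push_not_relator) (simp_all add: lam_Cons)

lemma foldl_push_lam_cancel: "i \<ge> 1 \<Longrightarrow> foldl push (t @ lam i) (lam i) = t"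
  unfolding foldl_push_lam by (rule push_relator[where r = "lam i @ lam i"])
    (auto simp: relator_def lam_Cons)

lemma foldl_push_relator:
  assumes irr: "T2_irreducible s" and r: "relator r"
  shows "foldl push s r = s"
proof -
  obtain i where i: "i \<ge> 1" and r_eq: "r = lam i @ lam i"
    using r unfolding relator_def by blast
  show ?thesis
  proof (cases "\<exists>t. s = t @ lam i")
    case True
    then obtain t where t: "s = t @ lam i" by blast
    with irr have "\<not> ends_in_relator (t @ lam i)"
      by (simp add: T2_irreducible_not_ends_in_relator)
    then have "foldl push t (lam i) = s" unfolding t by (rule foldl_push_lam_append)
    moreover have "foldl push s (lam i) = t" unfolding t using i by (rule foldl_push_lam_cancel)
    ultimately show ?thesis unfolding r_eq foldl_append by simp
  next
    case False
    have "\<not> ends_in_relator (s @ lam i)"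
    proof
      assume "ends_in_relator (s @ lam i)"
      then obtain t j where "s @ lam i = t @ lam j @ lam j"
        unfolding ends_in_relator_def relator_def by blast
      then have "s = t @ lam j" "i = j" using append_lam_eq[of s i "t @ lam j" j] by simp_all
      with False show False by blast
    qed
    then have "foldl push s (lam i) = s @ lam i" by (rule foldl_push_lam_append)
    moreover have "foldl push (s @ lam i) (lam i) = s" using i by (rule foldl_push_lam_cancel)
    ultimately show ?thesis unfolding r_eq foldl_append by simp
  qed
qed

definition reduce :: "letter list \<Rightarrow> letter list" where
  "reduce x = foldl push [] x"

lemma T2_irreducible_foldl_push: "T2_irreducible s \<Longrightarrow> T2_irreducible (foldl push s xs)"
  by (induction xs arbitrary: s) (simp_all add: T2_irreducible_push)

lemma T2_irreducible_reduce: "T2_irreducible (reduce x)"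
proof -
  have "T2_irreducible []"
    unfolding T2_irreducible_def relator_def lam_def by auto
  then show ?thesis unfolding reduce_def by (rule T2_irreducible_foldl_push)
qed

lemma pi2_eq_reduce: "pi2_eq x y \<Longrightarrow> reduce x = reduce y"
proof (induction rule: pi2_eq.induct)
  case (rel r u v)
  then show ?case
    using foldl_push_relator[OF T2_irreducible_reduce[unfolded reduce_def]]
    by (simp add: reduce_def)
qed simp_all

lemma reduce_T2_irreducible: "T2_irreducible w \<Longrightarrow> reduce w = w"
proof (induction w rule: rev_induct)
  case Nil
  then show ?case by (simp add: reduce_def)
next
  case (snoc l w)
  then have "reduce w = w" using T2_irreducible_append_left by blast
  then have "reduce (w @ [l]) = push w l" unfolding reduce_def by simp
  also have "\<dots> = w @ [l]"
    using snoc.prems by (simp add: push_not_relator T2_irreducible_not_ends_in_relator)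
  finally show ?case .
qed

lemma foldl_push_Nil_in_star: "foldl push s y = [] \<Longrightarrow> s \<in> star (Pre Lambda)"
proof (induction y arbitrary: s)
  case Nil
  then show ?case by (simp add: star_Nil)
next
  case (Cons l y)
  then have pushed: "push s l \<in> star (Pre Lambda)" by simp
  from push_cases[of s l] have "s @ [l] \<in> star (Pre Lambda)"
  proof
    assume "push s l = s @ [l]"
    with pushed show ?thesis by simp
  next
    assume "\<exists>r. relator r \<and> s @ [l] = push s l @ r"
    then obtain r where "relator r" "s @ [l] = push s l @ r" by blast
    then show ?thesis by (simp add: pushed star_append relator_in_star_Pre_Lambda)
  qed
  then show ?case by (rule star_Pre_prefix) simp
qed

theorem mainTheorem6:
  fixes w :: "letter list"
  assumes "T2_irreducible w"
    and "right_invertible w"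
  shows "w \<in> star (Pre Lambda)"
proof -
  obtain w' where "pi2_eq (w @ w') []"
    using assms(2) unfolding right_invertible_def by blast
  then have "reduce (w @ w') = reduce []" by (rule pi2_eq_reduce)
  then have "reduce (w @ w') = []" by (simp add: reduce_def)
  then have "foldl push w w' = []"
    using reduce_T2_irreducible[OF assms(1)] by (simp add: reduce_def)
  then show ?thesis by (rule foldl_push_Nil_in_star)
qed

end
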